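(* Let $G$ be a finite multigraph (no loops), let $\ell \geq 4$ be an integer, let $s$ be a vertex of $G$, and let $A \subsetneq V(G)$ with $s \notin A$ be such that $\lambda_G(x,y) \geq \ell$ for any two distinct $x,y\in A$ and such that no edge of $G$ has both endvertices outside $A$. Let $F_1$ and $F_2$ be independent sets in $L(G,s,\tau_A)$ of sizes $r_1$ and $r_2$ respectively, and suppose there are dangerous sets $D_1$ and $D_2$ such that $F_i = \delta(\{s\}) \cap \delta(D_i)$ for $i=1,2$. Set $\alpha = |F_1 \cap F_2|$. If $\alpha > 0$, $r_1 > \alpha$, $r_2 > \alpha$, and $V(G) \setminus (D_1 \cup D_2 \cup \{s\})$ contains a vertex of $A$, then $r_1 + r_2 \leq \lfloor \deg(s)/2 \rfloor + 2$.
   Context: $\lambda_G(x,y)$ is the maximum number of pairwise edge-disjoint $x$–$y$ paths in $G$; $\delta(X)$ is the set of edges with exactly one endvertex in $X$. Lifting two distinct edges $sx,sy$ means deleting them and adding a new edge $xy$. The target function $\tau_A$ assigns $\ell$ to pairs of vertices both in $A$ and $0$ otherwise; a pair of edges at $s$ is $\tau_A$-admissible if after lifting them the new graph $G'$ satisfies $\lambda_{G'}(x,y)\ge\tau_A(x,y)$ for all distinct $x,y\in V(G)\setminus\{s\}$. The lifting graph $L(G,s,\tau_A)$ has as vertices the edges incident with $s$, two being adjacent iff they form a $\tau_A$-admissible pair. A set $D \subseteq V(G)\setminus\{s\}$ is dangerous if both $D$ and $V(G)\setminus(D\cup\{s\})$ contain vertices of $A$ and $|\delta_G(D)| \leq \ell+1$.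 *)

theory Defs
  imports Main
begin

text \<open>Parallel edges are distinct identifiers with the same endpoints.\<close>

definition multigraph :: "'a set \<Rightarrow> 'e set \<Rightarrow> ('e \<Rightarrow> 'a set) \<Rightarrow> bool" where
  "multigraph V E ends \<longleftrightarrow> finite V \<and> finite E \<and>
     (\<forall>e\<in>E. ends e \<subseteq> V \<and> card (ends e) = 2)"

definition is_path :: "'a set \<Rightarrow> 'e set \<Rightarrow> ('e \<Rightarrow> 'a set) \<Rightarrow> 'a \<Rightarrow> 'a \<Rightarrow> 'e list \<Rightarrow> bool" where
  "is_path V E ends x y es \<longleftrightarrow> (\<exists>vs. length vs = Suc (length es) \<and> distinct vs \<and>
     set vs \<subseteq> V \<and> set es \<subseteq> E \<and> hd vs = x \<and> last vs = y \<and>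
     (\<forall>i<length es. ends (es ! i) = {vs ! i, vs ! Suc i}))"

definition edge_conn :: "'a set \<Rightarrow> 'e set \<Rightarrow> ('e \<Rightarrow> 'a set) \<Rightarrow> 'a \<Rightarrow> 'a \<Rightarrow> nat" where
  "edge_conn V E ends x y = (GREATEST k. \<exists>ps. length ps = k \<and>
     (\<forall>p\<in>set ps. is_path V E ends x y p) \<and>
     (\<forall>i<k. \<forall>j<k. i \<noteq> j \<longrightarrow> set (ps ! i) \<inter> set (ps ! j) = {}))"

definition cut :: "'e set \<Rightarrow> ('e \<Rightarrow> 'a set) \<Rightarrow> 'a set \<Rightarrow> 'e set" where
  "cut E ends X = {e \<in> E. card (ends e \<inter> X) = 1}"

definition degree :: "'e set \<Rightarrow> ('e \<Rightarrow> 'a set) \<Rightarrow> 'a \<Rightarrow> nat" where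
  "degree E ends s = card (cut E ends {s})"

definition other_end :: "('e \<Rightarrow> 'a set) \<Rightarrow> 'a \<Rightarrow> 'e \<Rightarrow> 'a" where
  "other_end ends s e = (THE v. ends e = {s, v})"

text \<open>Lifting the edges e1 = s x and e2 = s y: delete them and add a new edge x y.
  The resulting graph has edge identifiers of type 'e option: Some e for old edges,
  None for the new edge.\<close>

definition lift_edges :: "'e set \<Rightarrow> 'e \<Rightarrow> 'e \<Rightarrow> 'e option set" where
  "lift_edges E e1 e2 = insert None (Some ` (E - {e1, e2}))"

definition lift_ends :: "('e \<Rightarrow> 'a set) \<Rightarrow> 'a \<Rightarrow> 'e \<Rightarrow> 'e \<Rightarrow> 'e option \<Rightarrow> 'a set" where
  "lift_ends ends s e1 e2 f = (case f of None \<Rightarrow> {other_end ends s e1, other_end ends s e2}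
                                     | Some e \<Rightarrow> ends e)"

definition tau :: "'a set \<Rightarrow> nat \<Rightarrow> 'a \<Rightarrow> 'a \<Rightarrow> nat" where
  "tau A l x y = (if x \<in> A \<and> y \<in> A then l else 0)"

definition admissible ::
  "'a set \<Rightarrow> 'e set \<Rightarrow> ('e \<Rightarrow> 'a set) \<Rightarrow> 'a \<Rightarrow> 'a set \<Rightarrow> nat \<Rightarrow> 'e \<Rightarrow> 'e \<Rightarrow> bool" where
  "admissible V E ends s A l e1 e2 \<longleftrightarrow>
     e1 \<in> cut E ends {s} \<and> e2 \<in> cut E ends {s} \<and> e1 \<noteq> e2 \<and>
     (\<forall>x\<in>V - {s}. \<forall>y\<in>V - {s}. x \<noteq> y \<longrightarrow>
        edge_conn V (lift_edges E e1 e2) (lift_ends ends s e1 e2) x y \<ge> tau A l x y)"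

text \<open>Independent sets in the lifting graph L(G,s,tau_A), whose vertex set is
  delta({s}) and whose edges are the admissible pairs.\<close>

definition lifting_independent ::
  "'a set \<Rightarrow> 'e set \<Rightarrow> ('e \<Rightarrow> 'a set) \<Rightarrow> 'a \<Rightarrow> 'a set \<Rightarrow> nat \<Rightarrow> 'e set \<Rightarrow> bool" where
  "lifting_independent V E ends s A l F \<longleftrightarrow> F \<subseteq> cut E ends {s} \<and>
     (\<forall>e1\<in>F. \<forall>e2\<in>F. \<not> admissible V E ends s A l e1 e2)"

definition dangerous ::
  "'a set \<Rightarrow> 'e set \<Rightarrow> ('e \<Rightarrow> 'a set) \<Rightarrow> 'a \<Rightarrow> 'a set \<Rightarrow> nat \<Rightarrow> 'a set \<Rightarrow> bool" where
  "dangerous V E ends s A l D \<longleftrightarrow> D \<subseteq> V - {s} \<and> D \<inter> A \<noteq> {} \<and>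
     (V - (D \<union> {s})) \<inter> A \<noteq> {} \<and> card (cut E ends D) \<le> l + 1"

end

theory Submission
  imports Defs
begin

(* Write d(X) for the number of edges leaving X. Counting edge by edge,
     2 r1 + 2 r2 + d(D1 \<inter> D2) + d(D1 \<union> D2 \<union> {s}) + d(D1 - D2) + d(D2 - D1)
       \<le> 2 d(D1) + 2 d(D2) + deg(s).
   The other endpoints of edges in F1 \<inter> F2, F1 - F2 and F2 - F1 lie in A, so each of the
   four sets on the left separates a vertex of A from one outside D1 \<union> D2 \<union> {s} and, by the
   easy direction of Menger's theorem, has d \<ge> l; dangerous sets have d \<le> l + 1. Hence 2 (r1 + r2) \<le> deg(s) + 4. *)

lemma nat_exists_flip:
  "P (0::nat) \<Longrightarrow> \<not> P n \<Longrightarrow> \<exists>i<n. P i \<and> \<not> P (Suc i)"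
proof (induction n)
  case (Suc n)
  then show ?case by (cases "P n") (auto intro: less_SucI)
qed simp

lemma is_path_crosses_cut:
  assumes "is_path V E ends x y es" "x \<in> S" "y \<notin> S"
  shows "\<exists>e\<in>set es. e \<in> cut E ends S"
proof -
  obtain vs where vs: "length vs = Suc (length es)" "distinct vs" "set es \<subseteq> E"
    "hd vs = x" "last vs = y" "\<forall>i<length es. ends (es ! i) = {vs ! i, vs ! Suc i}"
    using assms(1) unfolding is_path_def by blast
  have "vs \<noteq> []" using vs(1) by auto
  then have "vs ! 0 = x" "vs ! length es = y"
    using vs(1,4,5) by (simp_all add: hd_conv_nth last_conv_nth)
  then have "vs ! 0 \<in> S" "vs ! length es \<notin> S" using assms(2,3) by simp_all
  then obtain i where i: "i < length es" "vs ! i \<in> S" "vs ! Suc i \<notin> S"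
    using nat_exists_flip[of "\<lambda>i. vs ! i \<in> S"] by blast
  then have "ends (es ! i) \<inter> S = {vs ! i}" using vs(6) by auto
  then show ?thesis using i(1) vs(3) unfolding cut_def by (intro bexI[of _ "es ! i"]) auto
qed

lemma edge_conn_le_card_cut:
  assumes G: "multigraph V E ends" and "x \<in> S" "y \<notin> S"
  shows "edge_conn V E ends x y \<le> card (cut E ends S)"
proof -
  let ?paths = "\<lambda>k. \<exists>ps. length ps = k \<and> (\<forall>p\<in>set ps. is_path V E ends x y p) \<and>
     (\<forall>i<k. \<forall>j<k. i \<noteq> j \<longrightarrow> set (ps ! i) \<inter> set (ps ! j) = {})"
  have bound: "k \<le> card (cut E ends S)" if "?paths k" for k
  proof -
    obtain ps where ps: "length ps = k" "\<forall>p\<in>set ps. is_path V E ends x y p"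
      "\<forall>i<k. \<forall>j<k. i \<noteq> j \<longrightarrow> set (ps ! i) \<inter> set (ps ! j) = {}"
      using \<open>?paths k\<close> by blast
    have "\<forall>i<k. \<exists>e. e \<in> set (ps ! i) \<and> e \<in> cut E ends S"
      using is_path_crosses_cut[OF _ assms(2,3)] ps(1,2) by (metis nth_mem)
    then obtain f where f: "\<forall>i<k. f i \<in> set (ps ! i) \<and> f i \<in> cut E ends S"
      by metis
    have "inj_on f {..<k}"
      using f ps(3) unfolding inj_on_def by (metis disjoint_iff lessThan_iff)
    moreover have "f ` {..<k} \<subseteq> cut E ends S" using f by auto
    moreover have "finite (cut E ends S)" using G unfolding multigraph_def cut_def by simp
    ultimately show ?thesis using card_inj_on_le[of f "{..<k}"] by simp
  qed
  have "?paths 0" by simp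
  then have "?paths (Greatest ?paths)" using bound by (rule GreatestI_nat)
  then show ?thesis unfolding edge_conn_def by (rule bound)
qed

lemma card_cut_eq_sum:
  "finite E \<Longrightarrow> card (cut E ends S) = (\<Sum>e\<in>E. of_bool (card (ends e \<inter> S) = 1))"
  by (simp add: cut_def Collect_conj_eq Int_commute)

lemma card_inter_cut_eq_sum:
  "finite E \<Longrightarrow> card (cut E ends S \<inter> cut E ends T) =
     (\<Sum>e\<in>E. of_bool (card (ends e \<inter> S) = 1) * of_bool (card (ends e \<inter> T) = 1))"
  by (simp add: cut_def Collect_conj_eq Int_commute Int_left_commute Int_assoc)

lemma card_doubleton_inter_eq_1_iff:
  "u \<noteq> v \<Longrightarrow> card ({u, v} \<inter> S) = 1 \<longleftrightarrow> (u \<in> S \<longleftrightarrow> v \<notin> S)"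
  by (cases "u \<in> S"; cases "v \<in> S") auto

lemma multigraph_edgeE:
  assumes "multigraph V E ends" "e \<in> E"
  obtains u v where "ends e = {u, v}" "u \<noteq> v"
  using assms card_2_iff unfolding multigraph_def by metis

lemma cut_singletonE:
  assumes G: "multigraph V E ends" and "e \<in> cut E ends {s}"
  obtains v where "ends e = {s, v}" "v \<noteq> s" "\<And>D. s \<notin> D \<Longrightarrow> e \<in> cut E ends D \<longleftrightarrow> v \<in> D"
proof -
  have "e \<in> E" "card (ends e \<inter> {s}) = 1" using assms(2) unfolding cut_def by auto
  obtain u w where uw: "ends e = {u, w}" "u \<noteq> w" using multigraph_edgeE[OF G \<open>e \<in> E\<close>] .
  with \<open>card (ends e \<inter> {s}) = 1\<close> have "u = s \<longleftrightarrow> w \<noteq> s"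
    using card_doubleton_inter_eq_1_iff[of u w "{s}"] by simp
  with uw obtain v where "ends e = {s, v}" "v \<noteq> s" by (metis insert_commute)
  moreover have "e \<in> cut E ends D \<longleftrightarrow> v \<in> D" if "s \<notin> D" for D
    using \<open>e \<in> E\<close> \<open>ends e = {s, v}\<close> \<open>v \<noteq> s\<close> \<open>s \<notin> D\<close> card_doubleton_inter_eq_1_iff[of s v D]
    by (simp add: cut_def)
  ultimately show thesis using that by blast
qed

lemma card_cut_uncrossing_at_vertex:
  fixes E :: "'e set" and ends :: "'e \<Rightarrow> 'a set"
  assumes G: "multigraph V E ends" and "s \<notin> D1" "s \<notin> D2"
  shows "2 * card (cut E ends {s} \<inter> cut E ends D1) + 2 * card (cut E ends {s} \<inter> cut E ends D2)
      + card (cut E ends (D1 \<inter> D2)) + card (cut E ends (D1 \<union> D2 \<union> {s}))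
      + card (cut E ends (D1 - D2)) + card (cut E ends (D2 - D1))
    \<le> 2 * card (cut E ends D1) + 2 * card (cut E ends D2) + degree E ends s"
proof -
  define c :: "'a set \<Rightarrow> 'e \<Rightarrow> nat" where "c S e = of_bool (card (ends e \<inter> S) = 1)" for S e
  have edgewise: "2 * (c {s} e * c D1 e) + 2 * (c {s} e * c D2 e) + c (D1 \<inter> D2) e
      + c (D1 \<union> D2 \<union> {s}) e + c (D1 - D2) e + c (D2 - D1) e
    \<le> 2 * c D1 e + 2 * c D2 e + c {s} e" if "e \<in> E" for e
  proof -
    obtain u v where "ends e = {u, v}" "u \<noteq> v" using multigraph_edgeE[OF G \<open>e \<in> E\<close>] .
    then show ?thesis using assms(2,3) unfolding c_def
      by (cases "u = s"; cases "v = s"; cases "u \<in> D1"; cases "u \<in> D2"; cases "v \<in> D1";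
          cases "v \<in> D2") (simp_all add: card_doubleton_inter_eq_1_iff)
  qed
  have "finite E" using G unfolding multigraph_def by simp
  then have "card (cut E ends S) = sum (c S) E"
    and "card (cut E ends {s} \<inter> cut E ends S) = (\<Sum>e\<in>E. c {s} e * c S e)" for S
    unfolding c_def by (simp_all only: card_cut_eq_sum card_inter_cut_eq_sum)
  moreover have "(\<Sum>e\<in>E. 2 * (c {s} e * c D1 e) + 2 * (c {s} e * c D2 e) + c (D1 \<inter> D2) e
      + c (D1 \<union> D2 \<union> {s}) e + c (D1 - D2) e + c (D2 - D1) e)
    \<le> (\<Sum>e\<in>E. 2 * c D1 e + 2 * c D2 e + c {s} e)"
    using edgewise by (rule sum_mono)
  ultimately show ?thesis
    by (simp only: degree_def sum.distrib sum_distrib_left[symmetric])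
qed

theorem lemma4p3:
  fixes V :: "'a set" and E :: "'e set" and ends :: "'e \<Rightarrow> 'a set"
    and l :: nat and s :: 'a and A :: "'a set"
    and F1 F2 :: "'e set" and D1 D2 :: "'a set"
  assumes G: "multigraph V E ends"
    and l: "l \<ge> 4"
    and s: "s \<in> V"
    and A: "A \<subset> V" "s \<notin> A"
    and conn: "\<forall>x\<in>A. \<forall>y\<in>A. x \<noteq> y \<longrightarrow> edge_conn V E ends x y \<ge> l"
    and noedge: "\<forall>e\<in>E. ends e \<inter> A \<noteq> {}"
    and F1: "lifting_independent V E ends s A l F1"
    and F2: "lifting_independent V E ends s A l F2"
    and D1: "dangerous V E ends s A l D1" "F1 = cut E ends {s} \<inter> cut E ends D1"
    and D2: "dangerous V E ends s A l D2" "F2 = cut E ends {s} \<inter> cut E ends D2"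
    and alpha: "card (F1 \<inter> F2) > 0"
    and r1: "card F1 > card (F1 \<inter> F2)"
    and r2: "card F2 > card (F1 \<inter> F2)"
    and out: "(V - (D1 \<union> D2 \<union> {s})) \<inter> A \<noteq> {}"
  shows "card F1 + card F2 \<le> degree E ends s div 2 + 2"
proof -
  have "s \<notin> D1" "s \<notin> D2" "card (cut E ends D1) \<le> l + 1" "card (cut E ends D2) \<le> l + 1"
    using D1(1) D2(1) unfolding dangerous_def by auto
  obtain y where y: "y \<in> A" "y \<notin> D1 \<union> D2 \<union> {s}" using out by auto
  have separated: "l \<le> card (cut E ends S)" if "x \<in> S" "x \<in> A" "y \<notin> S" for x S
    using conn that y(1) edge_conn_le_card_cut[OF G that(1,3)] by (metis order.trans)
  have terminal: "\<exists>v\<in>A. (v \<in> D1 \<longleftrightarrow> e \<in> F1) \<and> (v \<in> D2 \<longleftrightarrow> e \<in> F2)"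
    if "e \<in> F1 \<union> F2" for e
  proof -
    have e: "e \<in> cut E ends {s}" using that D1(2) D2(2) by blast
    then obtain v where "ends e = {s, v}" "\<And>D. s \<notin> D \<Longrightarrow> e \<in> cut E ends D \<longleftrightarrow> v \<in> D"
      using cut_singletonE[OF G] by blast
    moreover from this(1) have "v \<in> A" using noedge e A(2) unfolding cut_def by auto
    ultimately show ?thesis using \<open>s \<notin> D1\<close> \<open>s \<notin> D2\<close> e D1(2) D2(2) by blast
  qed
  have "finite F1" "finite F2"
    using G D1(2) D2(2) unfolding multigraph_def cut_def by auto
  then have "F1 \<inter> F2 \<noteq> {}" "F1 - F2 \<noteq> {}" "F2 - F1 \<noteq> {}"
    using alpha r1 r2 by (auto simp: Diff_eq_empty_iff Int_absorb1 Int_absorb2)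
  then obtain e0 e1 e2 where "e0 \<in> F1 \<inter> F2" "e1 \<in> F1 - F2" "e2 \<in> F2 - F1" by blast
  then obtain x a b where "x \<in> A" "x \<in> D1 \<inter> D2" "a \<in> A" "a \<in> D1 - D2" "b \<in> A" "b \<in> D2 - D1"
    using terminal[of e0] terminal[of e1] terminal[of e2] by auto
  then have "l \<le> card (cut E ends (D1 \<inter> D2))" "l \<le> card (cut E ends (D1 \<union> D2 \<union> {s}))"
    "l \<le> card (cut E ends (D1 - D2))" "l \<le> card (cut E ends (D2 - D1))"
    using separated[of x "D1 \<inter> D2"] separated[of x "D1 \<union> D2 \<union> {s}"]
      separated[of a "D1 - D2"] separated[of b "D2 - D1"] y(2) by auto
  then have "2 * (card F1 + card F2) \<le> degree E ends s + 4"
    using card_cut_uncrossing_at_vertex[OF G \<open>s \<notin> D1\<close> \<open>s \<notin> D2\<close>]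
      \<open>card (cut E ends D1) \<le> l + 1\<close> \<open>card (cut E ends D2) \<le> l + 1\<close>
    unfolding D1(2) D2(2) by simp
  from div_le_mono[OF this, of 2] show ?thesis by simp
qed

end
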